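(* For complex parameters $x_0,x_1,y_0,y_1,y_2\in\mathbb{C}$, consider the polynomial \[ p(x,y)(s) = (s^4+2s^2)(x_0+x_1 s+s^2)+y_0+y_1 s+y_2 s^2 \] in the complex indeterminate $s$, and let \[ x_0^*=7,\quad x_1^* = \tfrac{6\sqrt{15}}{5},\quad y_0^* = \tfrac{27}{125},\quad y_1^* = \tfrac{54\sqrt{15}}{125},\quad y_2^*= -\tfrac{43}{5}. \] Then the abscissa $\alpha(p(x,y))$, viewed as a function of $(x_0,x_1,y_0,y_1,y_2)\in\mathbb{C}^5$, is locally minimized at $(x_0^*,x_1^*,y_0^*,y_1^*,y_2^* )$. Furthermore, there is a positive constant $\tau$ such that for all $(x_0,x_1,y_0,y_1,y_2)$ sufficiently close to $(x_0^*,x_1^*,y_0^*,y_1^*,y_2^* )$, \[ \alpha(p(x,y)) \geq \alpha(p(x^*,y^* )) + \tau \|d\|, \] where $d = [x_0 - x_0^*,\ x_1 - x_1^*,\ y_0 - y_0^*,\ y_1 - y_1^*,\ y_2 - y_2^*]\in\mathbb{C}^5$.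
   Context: For a polynomial $q$ with complex coefficients, its abscissa is $\alpha(q)=\max\{\Re z : q(z)=0\}$. Here $x(s)=x_0+x_1s+s^2$ and $y(s)=y_0+y_1s+y_2s^2$, and $p(x^*,y^* )$ denotes $p$ evaluated at the starred coefficients. $\|\cdot\|$ denotes the Euclidean norm on $\mathbb{C}^5$. *)

theory Defs
  imports "HOL-Analysis.Analysis" "HOL-Computational_Algebra.Polynomial"
begin

definition abscissa :: "complex poly \<Rightarrow> real" where
  "abscissa q = Max (Re ` {z. poly q z = 0})"

text \<open>p(x,y)(s) = (s^4 + 2 s^2)(x0 + x1 s + s^2) + y0 + y1 s + y2 s^2\<close>
definition pxy :: "complex \<Rightarrow> complex \<Rightarrow> complex \<Rightarrow> complex \<Rightarrow> complex \<Rightarrow> complex poly" where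
  "pxy x0 x1 y0 y1 y2 = [:0, 0, 2, 0, 1:] * [:x0, x1, 1:] + [:y0, y1, y2:]"

definition x0s :: complex where "x0s = 7"
definition x1s :: complex where "x1s = complex_of_real (6 * sqrt 15 / 5)"
definition y0s :: complex where "y0s = 27 / 125"
definition y1s :: complex where "y1s = complex_of_real (54 * sqrt 15 / 125)"
definition y2s :: complex where "y2s = - 43 / 5"

definition norm5 :: "complex \<Rightarrow> complex \<Rightarrow> complex \<Rightarrow> complex \<Rightarrow> complex \<Rightarrow> real" where
  "norm5 a b c d e = sqrt ((cmod a)^2 + (cmod b)^2 + (cmod c)^2 + (cmod d)^2 + (cmod e)^2)"

end

theory Submission
  imports Defs "HOL-Computational_Algebra.Fundamental_Theorem_Algebra"
begin

(* At the optimal parameters p = (s - beta)^6 with beta = -sqrt 15 / 5, so its abscissa is beta.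
   Near the optimum write p(t + beta) = prod_i (t - u_i); the u_i are small, since
   |u_i|^6 = O(|d|) for the parameter offset d.  The coefficients c_k of this shifted polynomial
   are affine in d: those of t^5, t^4, t^2, t, 1 determine d by a triangular system, and
   c3 = 4 beta c4 - 4 c5 holds identically.  By Vieta, with S = sum u_i, P = sum u_i^2 and
   b = -beta, this identity reads 4 S = c3 + 2 b (S^2 - P), where c3 = O(|u|^3).  Its real part
   gives sum_i (4 Re u_i + 2 b Re (u_i^2)) >= -N/25 for N = sum |u_i|^2, while each summand is
   at most 8 max(a,0) - |u_i|^2 where a = max Re u_i = alpha(p) - beta.  Hence N = O(a), and
   since every c_k is O(N), so is |d|. *)

lemma coeff_mult_linear:
  "coeff (p * [:a, 1:]) 0 = a * coeff p 0"
  "coeff (p * [:a, 1:]) (Suc k) = a * coeff p (Suc k) + coeff p k"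
  for p :: "'a :: comm_semiring_1 poly"
  by simp_all

lemma degree_prod_linear_le: "degree (\<Prod>i<n. [:- u i, 1:] :: 'a :: comm_ring_1 poly) \<le> n"
  using degree_prod_sum_le[of "{..<n}" "\<lambda>i. [:- u i, 1:] :: 'a poly"] by simp

lemma coeff_prod_linear_top: "coeff (\<Prod>i<n. [:- u i, 1:]) n = (1 :: 'a :: comm_ring_1)"
proof (induction n)
  case (Suc n)
  have "coeff (\<Prod>i<n. [:- u i, 1:]) (Suc n) = (0 :: 'a)"
    using degree_prod_linear_le[where n=n and u=u] by (simp add: coeff_eq_0)
  with Suc show ?case by (simp only: prod.lessThan_Suc coeff_mult_linear) simp
qed simp

lemma coeff_prod_linear_sum:
  "coeff (\<Prod>i<Suc n. [:- u i, 1:]) n = - (\<Sum>i<Suc n. u i :: 'a :: comm_ring_1)"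
proof (induction n)
  case (Suc n)
  then show ?case
    using coeff_prod_linear_top[where n="Suc n" and u=u]
    by (simp only: prod.lessThan_Suc coeff_mult_linear sum.lessThan_Suc) simp
qed simp

lemma coeff_prod_linear_sum_sq:
  "2 * coeff (\<Prod>i<Suc (Suc n). [:- u i, 1:]) n
     = (\<Sum>i<Suc (Suc n). u i) ^ 2 - (\<Sum>i<Suc (Suc n). u i ^ 2 :: 'a :: comm_ring_1)"
proof (induction n)
  case 0
  then show ?case by (simp add: power2_eq_square algebra_simps)
next
  case (Suc n)
  let ?P = "\<Prod>i<Suc (Suc n). [:- u i, 1:]" and ?v = "u (Suc (Suc n))"
    and ?S = "\<Sum>i<Suc (Suc n). u i" and ?Q = "\<Sum>i<Suc (Suc n). u i ^ 2"
  have "2 * coeff (\<Prod>i<Suc (Suc (Suc n)). [:- u i, 1:]) (Suc n) = 2 * ?v * ?S + 2 * coeff ?P n"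
    using coeff_prod_linear_sum[where n="Suc n" and u=u]
    by (simp only: prod.lessThan_Suc coeff_mult_linear) (simp add: algebra_simps)
  also have "\<dots> = (?S + ?v) ^ 2 - (?Q + ?v ^ 2)"
    unfolding Suc.IH by (simp add: power2_eq_square algebra_simps)
  finally show ?case by (simp only: sum.lessThan_Suc)
qed

lemma norm_coeff_prod_linear_le:
  fixes u :: "nat \<Rightarrow> 'a :: {real_normed_algebra_1, comm_ring_1}"
  assumes "\<And>i. i < n \<Longrightarrow> norm (u i) \<le> M"
  shows "norm (coeff (\<Prod>i<n. [:- u i, 1:]) k) \<le> real (n choose k) * M ^ (n - k)"
  using assms
proof (induction n arbitrary: k)
  case 0
  then show ?case by (simp add: coeff_1)
next
  case (Suc n)
  let ?P = "\<Prod>i<n. [:- u i, 1:]"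
  have uM: "norm (u n) \<le> M"
    and IH: "\<And>j. norm (coeff ?P j) \<le> real (n choose j) * M ^ (n - j)"
    using Suc by auto
  have M0: "0 \<le> M" using uM norm_ge_zero order_trans by blast
  show ?case
  proof (cases k)
    case 0
    have "norm (coeff (\<Prod>i<Suc n. [:- u i, 1:]) k) \<le> norm (u n) * norm (coeff ?P 0)"
      using 0 norm_mult_ineq[of "u n" "coeff ?P 0"]
      by (simp only: prod.lessThan_Suc coeff_mult_linear) simp
    also have "\<dots> \<le> M * M ^ n"
      using IH[of 0] uM M0 by (intro mult_mono) auto
    finally show ?thesis using 0 by simp
  next
    case (Suc j)
    have shift:
      "M * (real (n choose Suc j) * M ^ (n - Suc j)) = real (n choose Suc j) * M ^ (n - j)"
      by (cases "j < n") (auto simp: binomial_eq_0 Suc_diff_Suc simp flip: power_Suc)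
    have "norm (coeff (\<Prod>i<Suc n. [:- u i, 1:]) k)
        \<le> norm (u n) * norm (coeff ?P (Suc j)) + norm (coeff ?P j)"
      using Suc norm_triangle_ineq[of "- u n * coeff ?P (Suc j)" "coeff ?P j"]
        norm_mult_ineq[of "u n" "coeff ?P (Suc j)"]
      by (simp only: prod.lessThan_Suc coeff_mult_linear) simp
    also have "\<dots> \<le> M * (real (n choose Suc j) * M ^ (n - Suc j))
                       + real (n choose j) * M ^ (n - j)"
      using IH[of "Suc j"] IH[of j] uM M0 by (intro add_mono mult_mono) auto
    also have "\<dots> = real (Suc n choose k) * M ^ (Suc n - k)"
      unfolding shift Suc by (simp add: algebra_simps)
    finally show ?thesis .
  qed
qed

lemma norm_root_pow_le:
  fixes q :: "'a :: real_normed_field poly"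
  assumes root: "poly q z = 0" and deg: "degree q = n" and monic: "coeff q n = 1"
    and small: "\<And>k. k < n \<Longrightarrow> norm (coeff q k) \<le> \<epsilon>"
    and "n * \<epsilon> \<le> 1"
  shows "norm z ^ n \<le> n * \<epsilon>"
proof -
  have "poly q z = (\<Sum>k<n. coeff q k * z ^ k) + z ^ n"
    unfolding poly_altdef deg by (simp add: lessThan_Suc_atMost[symmetric] monic)
  then have "z ^ n = - (\<Sum>k<n. coeff q k * z ^ k)"
    using root by (simp add: eq_neg_iff_add_eq_0 add.commute)
  then have "norm z ^ n = norm (\<Sum>k<n. coeff q k * z ^ k)"
    by (metis norm_minus_cancel norm_power)
  also have "\<dots> \<le> (\<Sum>k<n. norm (coeff q k) * norm z ^ k)"
    using norm_sum[of "\<lambda>k. coeff q k * z ^ k" "{..<n}"] by (simp add: norm_mult norm_power)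
  also have "\<dots> \<le> (\<Sum>k<n. \<epsilon> * norm z ^ k)"
    by (intro sum_mono mult_right_mono small) auto
  finally have bound: "norm z ^ n \<le> (\<Sum>k<n. \<epsilon> * norm z ^ k)" .
  show ?thesis
  proof (cases "norm z \<le> 1")
    case True
    have "\<epsilon> * norm z ^ k \<le> \<epsilon>" if "k < n" for k
      using small[OF that] True order_trans[OF norm_ge_zero small[OF that]]
      by (simp add: mult_left_le power_le_one)
    then have "(\<Sum>k<n. \<epsilon> * norm z ^ k) \<le> n * \<epsilon>"
      using sum_mono[of "{..<n}" "\<lambda>k. \<epsilon> * norm z ^ k" "\<lambda>_. \<epsilon>"]
      by simp
    then show ?thesis using bound by simp
  next
    case False
    then obtain m where n: "n = Suc m"
      using bound by (cases n) auto
    have "\<epsilon> * norm z ^ k \<le> \<epsilon> * norm z ^ m" if "k < n" for k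
      using that False order_trans[OF norm_ge_zero small[OF that]] n
      by (intro mult_left_mono power_increasing) auto
    then have "norm z * norm z ^ m \<le> (n * \<epsilon>) * norm z ^ m"
      using bound n
        sum_mono[of "{..<n}" "\<lambda>k. \<epsilon> * norm z ^ k" "\<lambda>_. \<epsilon> * norm z ^ m"]
      by (simp add: algebra_simps)
    moreover have "0 < norm z ^ m"
      using False by (intro zero_less_power) linarith
    ultimately have "norm z \<le> n * \<epsilon>"
      by (simp add: mult_le_cancel_right)
    then show ?thesis using False \<open>n * \<epsilon> \<le> 1\<close> by simp
  qed
qed

lemma norm_diff_mono:
  "norm a \<le> r \<Longrightarrow> norm b \<le> s \<Longrightarrow> norm (a - b) \<le> r + s"
  by (rule norm_triangle_le_diff) simp

lemma re_linear_quadratic_le: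
  fixes u :: complex and a b :: real
  assumes "Re u \<le> a" "cmod u \<le> 1" "1/2 \<le> b" "b \<le> 1"
  shows "4 * Re u + 2 * b * Re (u^2) + (cmod u)^2 \<le> 8 * max a 0"
proof -
  have x: "\<bar>Re u\<bar> \<le> 1" using assms(2) abs_Re_le_cmod order_trans by blast
  have "4 * Re u + 2 * b * Re (u^2) + (cmod u)^2
      = 4 * Re u + (2*b + 1) * Re u^2 - (2*b - 1) * Im u^2"
    unfolding cmod_power2 by (simp add: power2_eq_square algebra_simps)
  also have "\<dots> \<le> 4 * Re u + 3 * Re u^2"
  proof -
    have "(2*b + 1) * Re u^2 \<le> 3 * Re u^2" and "0 \<le> (2*b - 1) * Im u^2"
      using assms(3,4) by (intro mult_right_mono mult_nonneg_nonneg; simp)+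
    then show ?thesis by linarith
  qed
  also have "\<dots> \<le> 8 * max a 0"
  proof -
    have "Re u ^ 2 \<le> \<bar>Re u\<bar>"
      using mult_left_mono[OF x abs_ge_zero[of "Re u"]]
      by (simp add: power2_eq_square abs_mult_self)
    then show ?thesis
      using assms(1) by (cases "0 \<le> Re u") auto
  qed
  finally show ?thesis .
qed

lemma sum_re_linear_quadratic_le:
  fixes u :: "'i \<Rightarrow> complex" and a b :: real
  assumes "finite I" "\<And>i. i \<in> I \<Longrightarrow> Re (u i) \<le> a \<and> cmod (u i) \<le> 1"
    and "1/2 \<le> b" "b \<le> 1"
  shows "4 * Re (\<Sum>i\<in>I. u i) + 2 * b * Re (\<Sum>i\<in>I. u i ^ 2)
           + (\<Sum>i\<in>I. cmod (u i) ^ 2)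
           \<le> 8 * card I * max a 0"
proof -
  have "(\<Sum>i\<in>I. 4 * Re (u i) + 2 * b * Re (u i ^ 2) + cmod (u i) ^ 2)
      \<le> (\<Sum>i\<in>I. 8 * max a 0)"
    using assms by (intro sum_mono re_linear_quadratic_le) auto
  then show ?thesis
    by (simp add: sum.distrib sum_distrib_left)
qed

lemma power_sum_relation_bounds:
  fixes S P C :: complex and b N :: real
  assumes rel: "4 * S = C + 2 * of_real b * (S^2 - P)"
    and P: "cmod P \<le> N" and C: "cmod C \<le> N / 50" and S: "cmod S \<le> 1/10"
    and N: "N \<le> 1/100" and b: "0 \<le> b" "b \<le> 1"
  shows "cmod S \<le> N" and "- N / 25 \<le> 4 * Re S + 2 * b * Re P"
proof -
  have N0: "0 \<le> N" using P norm_ge_zero order_trans by blast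
  have "4 * cmod S \<le> cmod C + 2 * b * cmod (S^2 - P)"
    using arg_cong[OF rel, of cmod] norm_triangle_ineq[of C "2 * of_real b * (S^2 - P)"] b
    by (simp add: norm_mult)
  also have "\<dots> \<le> N / 50 + 2 * (cmod S ^ 2 + N)"
    using C b P norm_triangle_ineq4[of "S^2" P]
    by (intro add_mono mult_mono) (auto simp: norm_power)
  finally have "4 * cmod S \<le> N / 50 + 2 * cmod S ^ 2 + 2 * N"
    by simp
  moreover have "cmod S ^ 2 \<le> cmod S / 10"
    using mult_left_mono[OF S norm_ge_zero[of S]] by (simp add: power2_eq_square)
  ultimately show small: "cmod S \<le> N"
    using N0 by linarith
  have "4 * Re S + 2 * b * Re P = Re C + 2 * b * Re (S^2)"
    using arg_cong[OF rel, of Re] by (simp add: algebra_simps)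
  moreover have "- (N / 50) \<le> Re C"
    using C abs_Re_le_cmod[of C] by linarith
  moreover have "- (N / 50) \<le> 2 * b * Re (S^2)"
  proof -
    have "cmod S * cmod S \<le> N * (1/100)"
      using small N N0 by (intro mult_mono) auto
    moreover have "\<bar>Re (S^2)\<bar> \<le> cmod S * cmod S"
      using abs_Re_le_cmod[of "S^2"] unfolding norm_power power2_eq_square[of "cmod S"] .
    ultimately have "- (N / 100) \<le> Re (S^2)"
      by linarith
    then have "2 * b * (- (N / 100)) \<le> 2 * b * Re (S^2)"
      using b by (intro mult_left_mono) auto
    moreover have "b * N \<le> N"
      using b N0 by (intro mult_left_le_one_le)
    ultimately show ?thesis by linarith
  qed
  ultimately show "- N / 25 \<le> 4 * Re S + 2 * b * Re P"
    by linarith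
qed

lemma six_choose_le: "6 choose k \<le> 20"
proof -
  have "6 choose k \<le> 6 choose (6 div 2)" by (rule binomial_maximum)
  also have "\<dots> = 20" by code_simp
  finally show ?thesis .
qed

lemma norm_coeff_sextic_le:
  fixes u :: "nat \<Rightarrow> complex"
  defines "q \<equiv> \<Prod>i<6. [:- u i, 1:]"
  assumes uM: "\<And>i. i < 6 \<Longrightarrow> cmod (u i) \<le> M" and M1: "M \<le> 1"
  shows "\<And>k. k < 5 \<Longrightarrow> cmod (coeff q k) \<le> 20 * M ^ 2"
    and "cmod (coeff q 3) \<le> 20 * M ^ 3"
    and "cmod (coeff q 5) \<le> 6 * M"
proof -
  have M0: "0 \<le> M" using uM[of 0] norm_ge_zero[of "u 0"] by linarith
  have cb: "cmod (coeff q k) \<le> real (6 choose k) * M ^ (6 - k)" for k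
    unfolding q_def using uM by (rule norm_coeff_prod_linear_le)
  have choose: "real (6 choose k) \<le> 20" for k
    using six_choose_le[of k] by linarith
  show "cmod (coeff q k) \<le> 20 * M ^ 2" if "k < 5" for k
  proof -
    have "M ^ (6 - k) \<le> M ^ 2"
      using that M0 M1 by (intro power_decreasing) auto
    then have "real (6 choose k) * M ^ (6 - k) \<le> 20 * M ^ 2"
      using choose[of k] M0 by (intro mult_mono) auto
    then show ?thesis using cb[of k] by linarith
  qed
  have "real (6 choose 3) * M ^ 3 \<le> 20 * M ^ 3"
    using choose[of 3] M0 by (intro mult_right_mono) auto
  then show "cmod (coeff q 3) \<le> 20 * M ^ 3"
    using cb[of 3] by simp
  show "cmod (coeff q 5) \<le> 6 * M"
    using cb[of 5] binomial_Suc_n[of 5] by simp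
qed

lemma sextic_root_bounds:
  fixes u :: "nat \<Rightarrow> complex" and a b :: real
  defines "q \<equiv> \<Prod>i<6. [:- u i, 1:]" and "N \<equiv> \<Sum>i<6. cmod (u i) ^ 2"
  assumes rel: "coeff q 3 = - 4 * of_real b * coeff q 4 - 4 * coeff q 5"
    and b: "1/2 \<le> b" "b \<le> 1" and re: "\<And>i. i < 6 \<Longrightarrow> Re (u i) \<le> a"
    and small: "N \<le> 1/1000000"
  shows "N \<le> 50 * max a 0" and "\<And>k. k < 6 \<Longrightarrow> cmod (coeff q k) \<le> 20 * N"
proof -
  define M where "M = sqrt N"
  define S where "S = (\<Sum>i<6. u i)"
  define P where "P = (\<Sum>i<6. u i ^ 2)"
  have N0: "0 \<le> N" unfolding N_def by (simp add: sum_nonneg)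
  have MM: "M ^ 2 = N" and M0: "0 \<le> M" unfolding M_def using N0 by simp_all
  have M_small: "M \<le> 1/1000"
    unfolding M_def using small by (intro real_le_lsqrt) (auto simp: power2_eq_square)
  have uM: "cmod (u i) \<le> M" if "i < 6" for i
    unfolding M_def N_def
    by (rule real_le_rsqrt, rule member_le_sum[of i "{..<6}" "\<lambda>i. cmod (u i) ^ 2"])
      (use that in auto)
  have "M \<le> 1" using M_small by simp
  note coeff_le = norm_coeff_sextic_le[of u M, OF uM this, folded q_def]
  have c5: "coeff q 5 = - S"
    using coeff_prod_linear_sum[where n=5 and u=u] unfolding q_def S_def by simp
  have c4: "2 * coeff q 4 = S ^ 2 - P"
    using coeff_prod_linear_sum_sq[where n=4 and u=u] unfolding q_def S_def P_def by simp
  have relS: "4 * S = coeff q 3 + 2 * of_real b * (S ^ 2 - P)"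
    using rel c4 c5 by algebra
  have P_le: "cmod P \<le> N"
    unfolding P_def N_def using norm_sum[of "\<lambda>i. u i ^ 2" "{..<6}"]
    by (simp add: norm_power)
  have c3_le: "cmod (coeff q 3) \<le> N / 50"
  proof -
    have "20 * M ^ 3 = 20 * (M * N)"
      using MM by (simp add: power2_eq_square power3_eq_cube)
    also have "\<dots> \<le> 20 * (N / 1000)"
      using mult_right_mono[OF M_small N0] by simp
    finally show ?thesis using coeff_le(2) M_small by simp
  qed
  have S_small: "cmod S \<le> 1/10"
    using coeff_le(3) M_small unfolding c5 by simp
  have "N \<le> 1/100" and "0 \<le> b" using small b by simp_all
  note S_le = power_sum_relation_bounds(1)[OF relS P_le c3_le S_small this b(2)]
    and re_ge = power_sum_relation_bounds(2)[OF relS P_le c3_le S_small this b(2)]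
  have "4 * Re S + 2 * b * Re P + N \<le> 8 * card {..<6::nat} * max a 0"
    unfolding S_def P_def N_def
    using re uM M_small b by (intro sum_re_linear_quadratic_le) (auto intro: order_trans[OF uM])
  then show "N \<le> 50 * max a 0"
    using re_ge by simp
  show "cmod (coeff q k) \<le> 20 * N" if "k < 6" for k
    using that coeff_le(1)[of k] S_le N0 c5 MM by (cases "k = 5") auto
qed

lemma norm5_components_le:
  "cmod a \<le> norm5 a b c d e" "cmod b \<le> norm5 a b c d e" "cmod c \<le> norm5 a b c d e"
  "cmod d \<le> norm5 a b c d e" "cmod e \<le> norm5 a b c d e"
  unfolding norm5_def by (rule real_le_rsqrt; simp)+

lemma norm5_nonneg: "0 \<le> norm5 a b c d e"
  unfolding norm5_def by simp

lemma norm5_le_sum: "norm5 a b c d e \<le> cmod a + cmod b + cmod c + cmod d + cmod e"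
  unfolding norm5_def
  by (rule real_le_lsqrt) (auto simp: power2_eq_square algebra_simps)

definition root_star :: complex where
  "root_star = - of_real (sqrt 15 / 5)"

lemma root_star_sq: "root_star ^ 2 = 3 / 5"
  unfolding root_star_def by (simp add: power2_eq_square flip: of_real_mult)

lemma sqrt_15_div_5_bounds: "1/2 \<le> sqrt 15 / 5" "sqrt 15 / 5 \<le> (1::real)"
proof -
  have "5/2 \<le> sqrt 15" by (rule real_le_rsqrt) (simp add: power2_eq_square)
  moreover have "sqrt 15 \<le> 5" by (rule real_le_lsqrt) auto
  ultimately show "1/2 \<le> sqrt 15 / 5" "sqrt 15 / 5 \<le> (1::real)" by simp_all
qed

lemma norm_root_star_le: "cmod root_star \<le> 1"
  unfolding root_star_def using sqrt_15_div_5_bounds by simp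

lemma star_params_eq:
  "x0s = 7" "x1s = - 6 * root_star" "y0s = 27 / 125" "y1s = - 54 / 25 * root_star" "y2s = - 43 / 5"
  unfolding x0s_def x1s_def y0s_def y1s_def y2s_def root_star_def by simp_all

lemma coeff_pxy_shift:
  fixes x0 x1 y0 y1 y2 :: complex
  defines "q \<equiv> pcompose (pxy x0 x1 y0 y1 y2) [:root_star, 1:]"
    and "\<beta> \<equiv> root_star"
    and "dx0 \<equiv> x0 - x0s" and "dx1 \<equiv> x1 - x1s"
    and "dy0 \<equiv> y0 - y0s" and "dy1 \<equiv> y1 - y1s" and "dy2 \<equiv> y2 - y2s"
  shows "coeff q 0 = dy0 + \<beta> * dy1 + 3/5 * dy2 + 39/25 * dx0 + 39/25 * \<beta> * dx1"
    and "coeff q 1 = dy1 + 2 * \<beta> * dy2 + 32/5 * \<beta> * dx0 + 27/5 * dx1"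
    and "coeff q 2 = dy2 + 28/5 * dx0 + 12 * \<beta> * dx1"
    and "coeff q 3 = 4 * \<beta> * dx0 + 8 * dx1"
    and "coeff q 4 = dx0 + 5 * \<beta> * dx1"
    and "coeff q 5 = dx1"
    and "coeff q 6 = 1"
    and "degree q = 6"
proof -
  let ?r = "[: dy0 + \<beta> * dy1 + 3/5 * dy2 + 39/25 * dx0 + 39/25 * \<beta> * dx1,
              dy1 + 2 * \<beta> * dy2 + 32/5 * \<beta> * dx0 + 27/5 * dx1,
              dy2 + 28/5 * dx0 + 12 * \<beta> * dx1, 4 * \<beta> * dx0 + 8 * dx1,
              dx0 + 5 * \<beta> * dx1, dx1, 1 :]"
  have "poly q t = poly ?r t" for t
  proof -
    have "\<beta> ^ 2 = 3 / 5" unfolding \<beta>_def by (rule root_star_sq)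
    then show ?thesis
      unfolding q_def poly_pcompose pxy_def dx0_def dx1_def dy0_def dy1_def dy2_def
        star_params_eq \<beta>_def[symmetric]
      by (simp only: poly_pCons poly_0 poly_add poly_mult) algebra
  qed
  then have "q = ?r" by (intro poly_eq_poly_eq_iff[THEN iffD1] ext)
  then show "coeff q 0 = dy0 + \<beta> * dy1 + 3/5 * dy2 + 39/25 * dx0 + 39/25 * \<beta> * dx1"
    and "coeff q 1 = dy1 + 2 * \<beta> * dy2 + 32/5 * \<beta> * dx0 + 27/5 * dx1"
    and "coeff q 2 = dy2 + 28/5 * dx0 + 12 * \<beta> * dx1"
    and "coeff q 3 = 4 * \<beta> * dx0 + 8 * dx1"
    and "coeff q 4 = dx0 + 5 * \<beta> * dx1"
    and "coeff q 5 = dx1"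
    and "coeff q 6 = 1"
    and "degree q = 6"
    by (simp_all add: numeral_eq_Suc)
qed

lemma coeff3_pxy_shift:
  "coeff (pcompose (pxy x0 x1 y0 y1 y2) [:root_star, 1:]) 3
     = 4 * root_star * coeff (pcompose (pxy x0 x1 y0 y1 y2) [:root_star, 1:]) 4
       - 4 * coeff (pcompose (pxy x0 x1 y0 y1 y2) [:root_star, 1:]) 5"
  using root_star_sq unfolding coeff_pxy_shift by algebra

lemma norm_shift_coeffs_le:
  fixes b dx0 dx1 dy0 dy1 dy2 :: complex
  assumes b: "cmod b \<le> 1"
    and d: "cmod dx0 \<le> r" "cmod dx1 \<le> r" "cmod dy0 \<le> r" "cmod dy1 \<le> r"
      "cmod dy2 \<le> r"
  shows "cmod (dy0 + b * dy1 + 3/5 * dy2 + 39/25 * dx0 + 39/25 * b * dx1) \<le> 19 * r"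
    and "cmod (dy1 + 2 * b * dy2 + 32/5 * b * dx0 + 27/5 * dx1) \<le> 19 * r"
    and "cmod (dy2 + 28/5 * dx0 + 12 * b * dx1) \<le> 19 * r"
    and "cmod (4 * b * dx0 + 8 * dx1) \<le> 19 * r"
    and "cmod (dx0 + 5 * b * dx1) \<le> 19 * r"
    and "cmod dx1 \<le> 19 * r"
proof -
  have bd: "cmod b * cmod dx0 \<le> r" "cmod b * cmod dx1 \<le> r"
    "cmod b * cmod dy1 \<le> r" "cmod b * cmod dy2 \<le> r"
    using b d by (auto intro: order_trans[OF mult_left_le_one_le])
  have r: "0 \<le> r" using d(1) norm_ge_zero order_trans by blast
  have "cmod (dy0 + b * dy1 + 3/5 * dy2 + 39/25 * dx0 + 39/25 * b * dx1)
      \<le> r + r + 3/5 * r + 39/25 * r + 39/25 * r"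
    by (intro norm_triangle_mono) (use d bd in \<open>simp_all add: norm_mult\<close>)
  then show "cmod (dy0 + b * dy1 + 3/5 * dy2 + 39/25 * dx0 + 39/25 * b * dx1) \<le> 19 * r"
    using r by linarith
  have "cmod (dy1 + 2 * b * dy2 + 32/5 * b * dx0 + 27/5 * dx1)
      \<le> r + 2 * r + 32/5 * r + 27/5 * r"
    by (intro norm_triangle_mono) (use d bd in \<open>simp_all add: norm_mult\<close>)
  then show "cmod (dy1 + 2 * b * dy2 + 32/5 * b * dx0 + 27/5 * dx1) \<le> 19 * r"
    using r by linarith
  have "cmod (dy2 + 28/5 * dx0 + 12 * b * dx1) \<le> r + 28/5 * r + 12 * r"
    by (intro norm_triangle_mono) (use d bd in \<open>simp_all add: norm_mult\<close>)
  then show "cmod (dy2 + 28/5 * dx0 + 12 * b * dx1) \<le> 19 * r"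
    using r by linarith
  have "cmod (4 * b * dx0 + 8 * dx1) \<le> 4 * r + 8 * r"
    by (intro norm_triangle_mono) (use d bd in \<open>simp_all add: norm_mult\<close>)
  then show "cmod (4 * b * dx0 + 8 * dx1) \<le> 19 * r"
    using r by linarith
  have "cmod (dx0 + 5 * b * dx1) \<le> r + 5 * r"
    by (intro norm_triangle_mono) (use d bd in \<open>simp_all add: norm_mult\<close>)
  then show "cmod (dx0 + 5 * b * dx1) \<le> 19 * r"
    using r by linarith
  show "cmod dx1 \<le> 19 * r"
    using d r by linarith
qed

lemma norm_coeff_pxy_shift_le:
  assumes "k < 6"
  shows "cmod (coeff (pcompose (pxy x0 x1 y0 y1 y2) [:root_star, 1:]) k)
           \<le> 19 * norm5 (x0 - x0s) (x1 - x1s) (y0 - y0s) (y1 - y1s) (y2 - y2s)"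
proof -
  note bounds = norm_shift_coeffs_le[OF norm_root_star_le norm5_components_le
      [where a = "x0 - x0s" and b = "x1 - x1s" and c = "y0 - y0s" and d = "y1 - y1s"
         and e = "y2 - y2s"]]
  have "k \<in> {0, 1, 2, 3, 4, 5}" using assms by auto
  then show ?thesis
    by (elim insertE emptyE) (simp_all only: coeff_pxy_shift bounds)
qed

lemma norm5_le_coeff_pxy_shift:
  assumes "\<And>k. k < 6 \<Longrightarrow>
    cmod (coeff (pcompose (pxy x0 x1 y0 y1 y2) [:root_star, 1:]) k) \<le> B"
  shows "norm5 (x0 - x0s) (x1 - x1s) (y0 - y0s) (y1 - y1s) (y2 - y2s) \<le> 373 * B"
proof -
  define c where "c k = coeff (pcompose (pxy x0 x1 y0 y1 y2) [:root_star, 1:]) k" for k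
  define dx0 dx1 dy0 dy1 dy2 where "dx0 = x0 - x0s" and "dx1 = x1 - x1s"
    and "dy0 = y0 - y0s" and "dy1 = y1 - y1s" and "dy2 = y2 - y2s"
  let ?\<beta> = root_star
  have c: "cmod (c k) \<le> B" if "k < 6" for k using assms that unfolding c_def by blast
  have B0: "0 \<le> B" using c[of 0] norm_ge_zero[of "c 0"] by linarith
  have \<beta>: "cmod ?\<beta> * cmod w \<le> cmod w" for w
    using norm_root_star_le by (simp add: mult_left_le_one_le)
  have solve: "dx1 = c 5"
    "dx0 = c 4 - 5 * ?\<beta> * dx1"
    "dy2 = c 2 - 28/5 * dx0 - 12 * ?\<beta> * dx1"
    "dy1 = c 1 - 2 * ?\<beta> * dy2 - 32/5 * ?\<beta> * dx0 - 27/5 * dx1"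
    "dy0 = c 0 - ?\<beta> * dy1 - 3/5 * dy2 - 39/25 * dx0 - 39/25 * ?\<beta> * dx1"
    unfolding c_def coeff_pxy_shift dx0_def dx1_def dy0_def dy1_def dy2_def by simp_all
  have dx1_le: "cmod dx1 \<le> B"
    using c by (simp add: solve(1))
  have "cmod dx0 \<le> B + 5 * B"
    unfolding solve(2)
    by (intro norm_diff_mono) (use c dx1_le \<beta>[of dx1] in \<open>simp_all add: norm_mult\<close>)
  then have dx0_le: "cmod dx0 \<le> 6 * B" by simp
  have "cmod dy2 \<le> B + 28/5 * (6 * B) + 12 * B"
    unfolding solve(3)
    by (intro norm_diff_mono)
      (use c dx1_le dx0_le \<beta>[of dx1] in \<open>simp_all add: norm_mult\<close>)
  then have dy2_le: "cmod dy2 \<le> 47 * B" using B0 by linarith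
  have "cmod dy1 \<le> B + 2 * (47 * B) + 32/5 * (6 * B) + 27/5 * B"
    unfolding solve(4)
    by (intro norm_diff_mono)
      (use c dx1_le dx0_le dy2_le \<beta>[of dy2] \<beta>[of dx0] in \<open>simp_all add: norm_mult\<close>)
  then have dy1_le: "cmod dy1 \<le> 139 * B" using B0 by linarith
  have "cmod dy0 \<le> B + 139 * B + 3/5 * (47 * B) + 39/25 * (6 * B) + 39/25 * B"
    unfolding solve(5)
    by (intro norm_diff_mono)
      (use c dx1_le dx0_le dy2_le dy1_le \<beta>[of dy1] \<beta>[of dx1]
        in \<open>simp_all add: norm_mult\<close>)
  then have dy0_le: "cmod dy0 \<le> 180 * B" using B0 by linarith
  show ?thesis
    using norm5_le_sum[of dx0 dx1 dy0 dy1 dy2] dx1_le dx0_le dy2_le dy1_le dy0_le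
    unfolding dx0_def dx1_def dy0_def dy1_def dy2_def by linarith
qed

lemma pxy_shift_factorization:
  obtains u :: "nat \<Rightarrow> complex"
  where "pcompose (pxy x0 x1 y0 y1 y2) [:root_star, 1:] = (\<Prod>i<6. [:- u i, 1:])"
    and "abscissa (pxy x0 x1 y0 y1 y2) = Re root_star + (MAX i\<in>{..<6}. Re (u i))"
proof -
  let ?p = "pxy x0 x1 y0 y1 y2"
  let ?q = "pcompose ?p [:root_star, 1:]"
  obtain u where "smult (lead_coeff ?q) (\<Prod>i<degree ?q. [:- u i, 1:]) = ?q"
    by (rule complex_poly_decompose')
  then have fac: "?q = (\<Prod>i<6. [:- u i, 1:])"
    using coeff_pxy_shift(7,8) by simp
  have "poly ?p z = poly ?q (z - root_star)" for z
    by (simp add: poly_pcompose)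
  also have "poly ?q w = (\<Prod>i<6. w - u i)" for w
    unfolding fac poly_prod by simp
  finally have "{z. poly ?p z = 0} = (\<lambda>i. u i + root_star) ` {..<6}"
    by (auto simp: algebra_simps)
  then have "abscissa ?p = (MAX i\<in>{..<6}. Re (u i) + Re root_star)"
    unfolding abscissa_def by (simp add: image_image)
  also have "\<dots> = Re root_star + (MAX i\<in>{..<6}. Re (u i))"
    by (subst Max_add_commute) (auto simp: lessThan_empty_iff)
  finally show ?thesis using fac that by blast
qed

lemma norm_shifted_root_pow_le:
  fixes u :: "nat \<Rightarrow> complex"
  assumes fac: "pcompose (pxy x0 x1 y0 y1 y2) [:root_star, 1:] = (\<Prod>i<6. [:- u i, 1:])"
    and "i < 6"
    and small: "114 * norm5 (x0 - x0s) (x1 - x1s) (y0 - y0s) (y1 - y1s) (y2 - y2s) \<le> 1"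
  shows "cmod (u i) ^ 6 \<le> 114 * norm5 (x0 - x0s) (x1 - x1s) (y0 - y0s) (y1 - y1s) (y2 - y2s)"
proof -
  have "poly (pcompose (pxy x0 x1 y0 y1 y2) [:root_star, 1:]) (u i) = 0"
    unfolding fac poly_prod using \<open>i < 6\<close> by auto
  then have "cmod (u i) ^ 6
      \<le> real 6 * (19 * norm5 (x0 - x0s) (x1 - x1s) (y0 - y0s) (y1 - y1s) (y2 - y2s))"
    by (rule norm_root_pow_le[OF _ coeff_pxy_shift(8,7)]) (use norm_coeff_pxy_shift_le small in auto)
  then show ?thesis by simp
qed

lemma abscissa_pxy_star: "abscissa (pxy x0s x1s y0s y1s y2s) = Re root_star"
proof -
  obtain u :: "nat \<Rightarrow> complex"
    where fac: "pcompose (pxy x0s x1s y0s y1s y2s) [:root_star, 1:] = (\<Prod>i<6. [:- u i, 1:])"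
      and abscissa_eq:
        "abscissa (pxy x0s x1s y0s y1s y2s) = Re root_star + (MAX i\<in>{..<6}. Re (u i))"
    by (rule pxy_shift_factorization)
  have "cmod (u i) ^ 6 \<le> 0" if "i < 6" for i
    using norm_shifted_root_pow_le[OF fac that] by (simp add: norm5_def)
  then show ?thesis unfolding abscissa_eq by (simp add: image_constant_conv lessThan_empty_iff)
qed

lemma sum_sq_shifted_roots_le:
  fixes u :: "nat \<Rightarrow> complex"
  assumes fac: "pcompose (pxy x0 x1 y0 y1 y2) [:root_star, 1:] = (\<Prod>i<6. [:- u i, 1:])"
    and small: "norm5 (x0 - x0s) (x1 - x1s) (y0 - y0s) (y1 - y1s) (y2 - y2s) \<le> 1 / 10 ^ 23"
  shows "(\<Sum>i<6. cmod (u i) ^ 2) \<le> 1/1000000"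
proof -
  have "cmod (u i) \<le> 1/2500" if "i < 6" for i
  proof -
    have "cmod (u i) ^ 6 \<le> 114 * norm5 (x0 - x0s) (x1 - x1s) (y0 - y0s) (y1 - y1s) (y2 - y2s)"
      using norm_shifted_root_pow_le[OF fac that] small by simp
    also have "\<dots> \<le> (1/2500) ^ 6"
      using small by (simp add: power_divide)
    finally show ?thesis
      by (simp add: power_mono_iff)
  qed
  then have "(\<Sum>i<6. cmod (u i) ^ 2) \<le> (\<Sum>i<6::nat. (1/2500)^2)"
    by (intro sum_mono power_mono) auto
  then show ?thesis by (simp add: power2_eq_square)
qed

lemma abscissa_pxy_ge:
  assumes small: "norm5 (x0 - x0s) (x1 - x1s) (y0 - y0s) (y1 - y1s) (y2 - y2s) \<le> 1 / 10 ^ 23"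
  shows "abscissa (pxy x0s x1s y0s y1s y2s)
           + norm5 (x0 - x0s) (x1 - x1s) (y0 - y0s) (y1 - y1s) (y2 - y2s) / 373000
         \<le> abscissa (pxy x0 x1 y0 y1 y2)"
proof -
  define e where "e = norm5 (x0 - x0s) (x1 - x1s) (y0 - y0s) (y1 - y1s) (y2 - y2s)"
  define q where "q = pcompose (pxy x0 x1 y0 y1 y2) [:root_star, 1:]"
  obtain u :: "nat \<Rightarrow> complex" where fac: "q = (\<Prod>i<6. [:- u i, 1:])"
    and abscissa_eq: "abscissa (pxy x0 x1 y0 y1 y2) = Re root_star + (MAX i\<in>{..<6}. Re (u i))"
    unfolding q_def by (rule pxy_shift_factorization)
  define a where "a = (MAX i\<in>{..<6}. Re (u i))"
  define N where "N = (\<Sum>i<6. cmod (u i) ^ 2)"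
  have N_small: "N \<le> 1/1000000"
    unfolding N_def using sum_sq_shifted_roots_le[OF fac[unfolded q_def] small] .
  have rel: "coeff q 3 = - 4 * of_real (sqrt 15 / 5) * coeff q 4 - 4 * coeff q 5"
    using coeff3_pxy_shift unfolding q_def root_star_def by simp
  have re: "Re (u i) \<le> a" if "i < 6" for i
    unfolding a_def using that by (intro Max_ge) auto
  note bounds = sextic_root_bounds
    [OF rel[unfolded fac] sqrt_15_div_5_bounds re N_small[unfolded N_def], folded N_def fac]
  have "0 \<le> a"
  proof (rule ccontr)
    assume "\<not> 0 \<le> a"
    then have "N = 0" using bounds(1) N_def by (simp add: sum_nonneg antisym)
    then have "u i = 0" if "i < 6" for i
      using that unfolding N_def by (simp add: sum_nonneg_eq_0_iff)
    then have "a = 0" unfolding a_def by (simp add: image_constant_conv lessThan_empty_iff)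
    with \<open>\<not> 0 \<le> a\<close> show False by simp
  qed
  have "e \<le> 373 * (20 * N)"
    unfolding e_def q_def[symmetric]
    by (rule norm5_le_coeff_pxy_shift) (use bounds(2) in \<open>simp add: q_def\<close>)
  also have "\<dots> \<le> 373000 * a"
    using bounds(1) \<open>0 \<le> a\<close> by simp
  finally show ?thesis
    unfolding abscissa_pxy_star abscissa_eq a_def[symmetric] e_def[symmetric] by simp
qed

theorem mainTheorem1:
  shows "(\<exists>\<delta>>0. \<forall>x0 x1 y0 y1 y2.
            norm5 (x0 - x0s) (x1 - x1s) (y0 - y0s) (y1 - y1s) (y2 - y2s) < \<delta> \<longrightarrow>
            abscissa (pxy x0 x1 y0 y1 y2) \<ge> abscissa (pxy x0s x1s y0s y1s y2s))
       \<and> (\<exists>\<tau>>0. \<exists>\<delta>>0. \<forall>x0 x1 y0 y1 y2.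
            norm5 (x0 - x0s) (x1 - x1s) (y0 - y0s) (y1 - y1s) (y2 - y2s) < \<delta> \<longrightarrow>
            abscissa (pxy x0 x1 y0 y1 y2) \<ge> abscissa (pxy x0s x1s y0s y1s y2s)
              + \<tau> * norm5 (x0 - x0s) (x1 - x1s) (y0 - y0s) (y1 - y1s) (y2 - y2s))"
proof -
  define \<delta> :: real where "\<delta> = 1 / 10 ^ 23"
  have growth: "abscissa (pxy x0s x1s y0s y1s y2s)
                  + 1 / 373000 * norm5 (x0 - x0s) (x1 - x1s) (y0 - y0s) (y1 - y1s) (y2 - y2s)
                \<le> abscissa (pxy x0 x1 y0 y1 y2)"
    if "norm5 (x0 - x0s) (x1 - x1s) (y0 - y0s) (y1 - y1s) (y2 - y2s) < \<delta>" for x0 x1 y0 y1 y2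
    using abscissa_pxy_ge[of x0 x1 y0 y1 y2] that unfolding \<delta>_def by simp
  have "abscissa (pxy x0s x1s y0s y1s y2s) \<le> abscissa (pxy x0 x1 y0 y1 y2)"
    if "norm5 (x0 - x0s) (x1 - x1s) (y0 - y0s) (y1 - y1s) (y2 - y2s) < \<delta>" for x0 x1 y0 y1 y2
    using growth[OF that] norm5_nonneg[of "x0 - x0s" "x1 - x1s" "y0 - y0s" "y1 - y1s" "y2 - y2s"]
    by linarith
  moreover have "\<delta> > 0" "(1 / 373000 :: real) > 0" unfolding \<delta>_def by simp_all
  ultimately show ?thesis using growth by blast
qed

end
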